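(* Let $H=(V,E)$ be a hypergraph whose vertex set $V$ is a partition of $[n]$ into sets of cardinality at least $2$, and suppose $H$ is downward-closed (for every $e\in E$ and every $e'\subseteq e$ with $|e'|>1$, $e'\in E$). Let $D=\{\bar i_I\}_{I\in V}$ with $\bar i_I\in I$ for each $I\in V$. Let $a\cdot w\le\delta$ ($a\in\mathbb{R}^{\mathcal{J}^H}$, $\delta\in\mathbb{R}$) be a valid inequality for $\mathrm{MC}^H$ such that $\{J\in\mathcal{J}^H: a_J\ne 0\}\subseteq\mathcal{J}^H_\le(D)$. Then $a\cdot w\le\delta$ is facet-inducing for $\mathrm{MC}^H$ if and only if $\operatorname{proj}_{\mathcal{J}^H_\le(D)}a\cdot v\le\delta$ is facet-inducing for $\mathrm{MC}^H_\le(D)$.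
   Context: Let $n$ be a positive integer, $[n]=\{1,\dots,n\}$. A hypergraph $H=(V,E)$ here has as vertex set $V$ a family of pairwise disjoint subsets of $[n]$, each of cardinality at least $2$, and hyperedge set $E$ consisting of subsets $e\subseteq V$ with $|e|\ge 2$. Write $L(V)=\{\{I\}: I\in V\}$. For a nonempty $e\subseteq V$, $\mathcal{J}^e$ denotes the family of sets $J\subseteq \bigcup_{I\in e} I$ with $|J\cap I|=1$ for every $I\in e$. Let $\mathcal{J}^H=\bigcup_{e\in L(V)\cup E}\mathcal{J}^e$. For a vector $w$ indexed by sets, write $w_i=w_{\{i\}}$ and $w(A)=\sum_{i\in A}w_i$. Let $\mathscr{S}^H=\{w\in\{0,1\}^{\mathcal{J}^H}: w(I)=1\ \forall I\in V;\ w_J=\prod_{i\in J}w_i\ \forall J\in\mathcal{J}^H, |J|>1\}$ and $\mathrm{MC}^H=\operatorname{conv}\mathscr{S}^H$. For $D$ as in the claim, $\mathcal{J}^H_\le(D)=\{J\in\mathcal{J}^H: J\subseteq[n]\setminus D\}$ and $\mathrm{MC}^H_\le(D)=\operatorname{conv}\{v\in\{0,1\}^{\mathcal{J}^H_\le(D)}: v(I\setminus D)\le 1\ \forall I\in V;\ v_J=\prod_{i\in J}v_i\ \forall J\in\mathcal{J}^H_\le(D), |J|>1\}$. $\operatorname{proj}_{S'}$ extracts coordinates indexed by $S'$. *)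

theory Defs
  imports "HOL-Analysis.Analysis"
begin

text \<open>The ground set [n] is modelled by a finite type 'a (with CARD('a) = n).
  Vectors indexed by a family of subsets of [n] are modelled as elements of
  real ^ ('a set) whose coordinates outside that family are zero.\<close>

definition hyp_ok :: "'a set set \<Rightarrow> 'a set set set \<Rightarrow> bool" where
  "hyp_ok V E \<longleftrightarrow>
     (\<forall>I\<in>V. \<forall>I'\<in>V. I \<noteq> I' \<longrightarrow> I \<inter> I' = {}) \<and>
     (\<forall>I\<in>V. finite I \<and> card I \<ge> 2) \<and>
     (\<forall>e\<in>E. e \<subseteq> V \<and> finite e \<and> card e \<ge> 2)"

definition partition_of_UNIV :: "'a set set \<Rightarrow> bool" where
  "partition_of_UNIV V \<longleftrightarrow> \<Union>V = UNIV"

definition downward_closed :: "'a set set set \<Rightarrow> bool" where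
  "downward_closed E \<longleftrightarrow> (\<forall>e\<in>E. \<forall>e'. e' \<subseteq> e \<and> card e' > 1 \<longrightarrow> e' \<in> E)"

definition Lsing :: "'a set set \<Rightarrow> 'a set set set" where
  "Lsing V = {{I} | I. I \<in> V}"

definition Jfam :: "'a set set \<Rightarrow> 'a set set" where
  "Jfam e = {J. J \<subseteq> \<Union>e \<and> (\<forall>I\<in>e. card (J \<inter> I) = 1)}"

definition JH :: "'a set set \<Rightarrow> 'a set set set \<Rightarrow> 'a set set" where
  "JH V E = (\<Union>e \<in> Lsing V \<union> E. Jfam e)"

definition SH :: "'a::finite set set \<Rightarrow> 'a set set set \<Rightarrow> (real ^ ('a set)) set" where
  "SH V E = {w. (\<forall>J \<in> JH V E. w $ J \<in> {0,1}) \<and> (\<forall>J. J \<notin> JH V E \<longrightarrow> w $ J = 0) \<and>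
               (\<forall>I\<in>V. (\<Sum>i\<in>I. w $ {i}) = 1) \<and>
               (\<forall>J \<in> JH V E. card J > 1 \<longrightarrow> w $ J = (\<Prod>i\<in>J. w $ {i}))}"

definition MCH :: "'a::finite set set \<Rightarrow> 'a set set set \<Rightarrow> (real ^ ('a set)) set" where
  "MCH V E = convex hull (SH V E)"

definition JHle :: "'a set set \<Rightarrow> 'a set set set \<Rightarrow> 'a set \<Rightarrow> 'a set set" where
  "JHle V E D = {J \<in> JH V E. J \<subseteq> - D}"

definition SHle :: "'a::finite set set \<Rightarrow> 'a set set set \<Rightarrow> 'a set \<Rightarrow> (real ^ ('a set)) set" where
  "SHle V E D = {v. (\<forall>J \<in> JHle V E D. v $ J \<in> {0,1}) \<and> (\<forall>J. J \<notin> JHle V E D \<longrightarrow> v $ J = 0) \<and>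
               (\<forall>I\<in>V. (\<Sum>i\<in>I - D. v $ {i}) \<le> 1) \<and>
               (\<forall>J \<in> JHle V E D. card J > 1 \<longrightarrow> v $ J = (\<Prod>i\<in>J. v $ {i}))}"

definition MCHle :: "'a::finite set set \<Rightarrow> 'a set set set \<Rightarrow> 'a set \<Rightarrow> (real ^ ('a set)) set" where
  "MCHle V E D = convex hull (SHle V E D)"

definition proj :: "'a::finite set set \<Rightarrow> real ^ ('a set) \<Rightarrow> real ^ ('a set)" where
  "proj S' a = (\<chi> J. if J \<in> S' then a $ J else 0)"

definition valid_ineq :: "('n::euclidean_space) set \<Rightarrow> 'n \<Rightarrow> real \<Rightarrow> bool" where
  "valid_ineq P a \<delta> \<longleftrightarrow> (\<forall>x\<in>P. a \<bullet> x \<le> \<delta>)"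

definition facet_inducing :: "('n::euclidean_space) set \<Rightarrow> 'n \<Rightarrow> real \<Rightarrow> bool" where
  "facet_inducing P a \<delta> \<longleftrightarrow> valid_ineq P a \<delta> \<and> {x\<in>P. a \<bullet> x = \<delta>} facet_of P"

end

theory Submission
  imports Defs
begin

text \<open>On the vertices of MC^H every coordinate w$J is an affine function of the coordinates
  indexed by J^H_<=(D): substituting w_{ibar I} = 1 - (sum of w_i over I - D) into
  w$J = (product of w_j over J) replaces the representative of I in J by the other elements
  of I, downward closedness keeps the new index sets in J^H, and induction on the number of
  representatives in J does the rest. Hence the projection onto J^H_<=(D) has an affine left
  inverse on MC^H, so it maps MC^H affinely and bijectively onto its image, and it preserves
  facets. That image is MC^H_<=(D), since every vertex v of MC^H_<=(D) lifts to a vertex of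
  MC^H by setting each w_{ibar I} to 1 - v(I - D). As a vanishes outside J^H_<=(D), the face
  cut out by a and the one cut out by its projection correspond under the projection.\<close>

lemma facet_of_injective_linear_image:
  assumes "linear f" "inj f"
  shows "f ` F facet_of f ` S \<longleftrightarrow> F facet_of S"
  using assms by (simp add: facet_of_def face_of_linear_image)

lemma facet_of_translation_eq:
  "(+) a ` F facet_of (+) a ` S \<longleftrightarrow> F facet_of S"
  by (simp add: facet_of_def aff_dim_translation_eq)

lemma facet_of_linear_image_left_inverse:
  fixes f :: "'a::euclidean_space \<Rightarrow> 'b::euclidean_space"
  assumes f: "linear f" and g: "linear g" and inv: "\<And>x. x \<in> S \<Longrightarrow> g (f x) + k = x"
    and "F \<subseteq> S"
  shows "f ` F facet_of f ` S \<longleftrightarrow> F facet_of S"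
proof -
  \<comment> \<open>L is injective and linear, and on S it is f followed by an injective affine map.\<close>
  define L where "L x = (f x, x - g (f x))" for x
  define embed :: "'b \<Rightarrow> 'b \<times> 'a" where "embed y = (y, 0)" for y
  have "linear L"
    unfolding L_def by (rule linearI)
      (simp_all add: linear_add[OF f] linear_add[OF g] linear_scale[OF f] linear_scale[OF g]
        scaleR_diff_right)
  moreover have "inj L"
    unfolding L_def by (rule injI) (metis Pair_inject diff_add_cancel)
  ultimately have L: "linear L" "inj L" .
  have embed: "linear embed" "inj embed"
    unfolding embed_def by (rule linearI, simp_all) (rule injI, simp)
  have L_image: "L ` X = (+) (0, k) ` embed ` f ` X" if "X \<subseteq> S" for X
  proof -
    have "L x = (0, k) + embed (f x)" if "x \<in> S" for x
      using inv[OF that] by (simp add: L_def embed_def) (metis add_diff_cancel_left')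
    then have "L ` X = (\<lambda>x. (0, k) + embed (f x)) ` X"
      using \<open>X \<subseteq> S\<close> by (intro image_cong) auto
    then show ?thesis
      by (simp add: image_image)
  qed
  have "F facet_of S \<longleftrightarrow> L ` F facet_of L ` S"
    using facet_of_injective_linear_image[OF L] by simp
  also have "\<dots> \<longleftrightarrow> embed ` f ` F facet_of embed ` f ` S"
    unfolding L_image[OF \<open>F \<subseteq> S\<close>] L_image[OF order_refl] facet_of_translation_eq ..
  also have "\<dots> \<longleftrightarrow> f ` F facet_of f ` S"
    by (rule facet_of_injective_linear_image[OF embed])
  finally show ?thesis
    by simp
qed

lemma affine_left_inverse_convex_hull:
  assumes f: "linear f" and g: "linear g" and inv: "\<And>x. x \<in> S \<Longrightarrow> g (f x) + k = x"
    and x: "x \<in> convex hull S"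
  shows "g (f x) + k = x"
proof -
  define h where "h x = x - g (f x)" for x
  have "linear h"
    unfolding h_def using linear_compose_sub[OF linear_ident linear_compose[OF f g]] by (simp add: o_def)
  then have "convex (h -` {k})"
    by (rule convex_linear_vimage) simp
  moreover have "S \<subseteq> h -` {k}"
    using inv by (auto simp: h_def) (metis add_diff_cancel_left')
  ultimately have "convex hull S \<subseteq> h -` {k}"
    by (rule hull_minimal[rotated])
  then have "h x = k"
    using x by blast
  then show ?thesis
    unfolding h_def by (metis diff_add_cancel add.commute)
qed

lemma facet_inducing_linear_image_left_inverse:
  fixes f :: "'a::euclidean_space \<Rightarrow> 'b::euclidean_space"
  assumes f: "linear f" and g: "linear g" and inv: "\<And>x. x \<in> S \<Longrightarrow> g (f x) + k = x"
    and inner: "\<And>x. a' \<bullet> f x = a \<bullet> x"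
  shows "facet_inducing (f ` S) a' \<delta> \<longleftrightarrow> facet_inducing S a \<delta>"
proof -
  have "{y \<in> f ` S. a' \<bullet> y = \<delta>} = f ` {x \<in> S. a \<bullet> x = \<delta>}"
    using inner by fastforce
  moreover have "valid_ineq (f ` S) a' \<delta> \<longleftrightarrow> valid_ineq S a \<delta>"
    using inner by (simp add: valid_ineq_def)
  moreover have "f ` {x \<in> S. a \<bullet> x = \<delta>} facet_of f ` S \<longleftrightarrow> {x \<in> S. a \<bullet> x = \<delta>} facet_of S"
    by (rule facet_of_linear_image_left_inverse[OF f g inv]) auto
  ultimately show ?thesis
    unfolding facet_inducing_def by simp
qed

definition affine_function_of :: "('x \<Rightarrow> 'v::real_inner) \<Rightarrow> 'x set \<Rightarrow> ('x \<Rightarrow> real) \<Rightarrow> bool" where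
  "affine_function_of p S \<phi> \<longleftrightarrow> (\<exists>c k. \<forall>x\<in>S. \<phi> x = c \<bullet> p x + k)"

lemma affine_function_of_const: "affine_function_of p S (\<lambda>_. k)"
  unfolding affine_function_of_def by (rule exI[of _ 0]) simp

lemma affine_function_of_nth: "affine_function_of p S (\<lambda>x. p x $ J)"
  unfolding affine_function_of_def
  by (intro exI[of _ "axis J 1"] exI[of _ 0]) (simp add: inner_commute[of "axis J 1"] inner_axis)
lemma affine_function_of_diff:
  assumes "affine_function_of p S \<phi>" "affine_function_of p S \<psi>"
  shows "affine_function_of p S (\<lambda>x. \<phi> x - \<psi> x)"
proof -
  obtain c k c' k' where "\<forall>x\<in>S. \<phi> x = c \<bullet> p x + k" "\<forall>x\<in>S. \<psi> x = c' \<bullet> p x + k'"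
    using assms unfolding affine_function_of_def by blast
  then have "\<forall>x\<in>S. \<phi> x - \<psi> x = (c - c') \<bullet> p x + (k - k')"
    by (simp add: inner_diff_left)
  then show ?thesis
    unfolding affine_function_of_def by blast
qed

lemma affine_function_of_sum:
  assumes "\<And>i. i \<in> A \<Longrightarrow> affine_function_of p S (\<phi> i)"
  shows "affine_function_of p S (\<lambda>x. \<Sum>i\<in>A. \<phi> i x)"
proof -
  have "\<forall>i\<in>A. \<exists>c k. \<forall>x\<in>S. \<phi> i x = c \<bullet> p x + k"
    using assms unfolding affine_function_of_def by blast
  then obtain c k where "\<forall>i\<in>A. \<forall>x\<in>S. \<phi> i x = c i \<bullet> p x + k i"
    unfolding bchoice_iff by blast
  then have "\<forall>x\<in>S. (\<Sum>i\<in>A. \<phi> i x) = (\<Sum>i\<in>A. c i) \<bullet> p x + (\<Sum>i\<in>A. k i)"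
    by (simp add: sum.distrib inner_sum_left)
  then show ?thesis
    unfolding affine_function_of_def by blast
qed

lemma affine_function_of_cong:
  "affine_function_of p S \<phi> \<Longrightarrow> (\<And>x. x \<in> S \<Longrightarrow> \<psi> x = \<phi> x) \<Longrightarrow> affine_function_of p S \<psi>"
  unfolding affine_function_of_def by simp

lemma affine_left_inverse_of_coordinates:
  fixes p :: "real ^ 'n \<Rightarrow> 'v::real_inner"
  assumes "\<And>J. affine_function_of p S (\<lambda>x. x $ J)"
  obtains g k where "linear g" "\<And>x. x \<in> S \<Longrightarrow> g (p x) + k = x"
proof -
  have "\<forall>J. \<exists>c k. \<forall>x\<in>S. x $ J = c \<bullet> p x + k"
    using assms unfolding affine_function_of_def by blast
  then obtain c k where ck: "\<And>J x. x \<in> S \<Longrightarrow> x $ J = c J \<bullet> p x + k J"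
    unfolding choice_iff by blast
  have "linear (\<lambda>y. \<chi> J. c J \<bullet> y)"
    by (rule linearI) (simp_all add: vec_eq_iff inner_add_right)
  moreover have "(\<chi> J. c J \<bullet> p x) + (\<chi> J. k J) = x" if "x \<in> S" for x
    using ck[OF that] by (simp add: vec_eq_iff)
  ultimately show ?thesis
    using that by blast
qed

lemma proj_nth: "proj S x $ J = (if J \<in> S then x $ J else 0)"
  unfolding proj_def by simp

lemma linear_proj: "linear (proj S)"
  by (rule linearI) (simp_all add: vec_eq_iff proj_nth)

lemma inner_proj:
  assumes "\<And>J. J \<notin> S \<Longrightarrow> a $ J = 0"
  shows "proj S a \<bullet> proj S x = a \<bullet> x"
  unfolding inner_vec_def using assms by (intro sum.cong) (auto simp: proj_nth)

lemma sum_in_01: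
  assumes "finite A" "\<And>j. j \<in> A \<Longrightarrow> f j \<in> {0::real, 1}" "sum f A \<le> 1"
  shows "sum f A \<in> {0, 1}"
proof (cases "\<forall>j\<in>A. f j = 0")
  case False
  then obtain j where j: "j \<in> A" "f j = 1"
    using assms(2) by blast
  then have "1 \<le> sum f A"
    using assms(1,2) member_le_sum[of j A f] by fastforce
  then show ?thesis
    using assms(3) by simp
qed simp

lemma prod_in_01:
  assumes "\<And>j. j \<in> A \<Longrightarrow> f j \<in> {0::real, 1}"
  shows "prod f A \<in> {0, 1}"
  using assms
proof (induction A rule: infinite_finite_induct)
  case (insert x F)
  then have "f x \<in> {0, 1}" "prod f F \<in> {0, 1}"
    by auto
  then show ?case
    using insert.hyps by auto
qed simp_all

lemma nth_eq_prod_singletons: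
  fixes v :: "real ^ ('b::finite set)"
  assumes "1 < card J \<Longrightarrow> v $ J = (\<Prod>i\<in>J. v $ {i})" and "J \<noteq> {}"
  shows "v $ J = (\<Prod>i\<in>J. v $ {i})"
proof (cases "1 < card J")
  case False
  moreover have "0 < card J"
    using assms(2) by (simp add: card_gt_0_iff)
  ultimately have "card J = 1"
    by linarith
  then obtain j where "J = {j}"
    by (rule card_1_singletonE)
  then show ?thesis
    by simp
qed (rule assms(1))

locale hypergraph_with_representatives =
  fixes V :: "'a::finite set set" and E :: "'a set set set"
    and ibar :: "'a set \<Rightarrow> 'a" and D :: "'a set"
  assumes hyp_ok: "hyp_ok V E" and partition: "partition_of_UNIV V"
    and ibar_in_block: "\<And>I. I \<in> V \<Longrightarrow> ibar I \<in> I" and D_eq: "D = ibar ` V"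
begin

lemma block_unique: "\<lbrakk>I \<in> V; I' \<in> V; i \<in> I; i \<in> I'\<rbrakk> \<Longrightarrow> I = I'"
  using hyp_ok unfolding hyp_ok_def by blast

lemma block_exists: "\<exists>I\<in>V. i \<in> I"
  using partition unfolding partition_of_UNIV_def by blast

definition block :: "'a \<Rightarrow> 'a set" where
  "block i = (THE I. I \<in> V \<and> i \<in> I)"

lemma block_eq: "I \<in> V \<Longrightarrow> i \<in> I \<Longrightarrow> block i = I"
  unfolding block_def using block_unique by (intro the_equality) auto

lemma block_in_V: "block i \<in> V"
  using block_exists block_eq by metis

lemma block_inter_D: "I \<in> V \<Longrightarrow> I \<inter> D = {ibar I}"
  using ibar_in_block block_unique unfolding D_eq by blast

lemma sum_block:
  assumes "I \<in> V"
  shows "(\<Sum>i\<in>I. f i) = f (ibar I) + (\<Sum>i\<in>I - D. f i)"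
proof -
  have "I = insert (ibar I) (I - D)" and "ibar I \<notin> I - D"
    using block_inter_D[OF assms] ibar_in_block[OF assms] by auto
  then show ?thesis
    by (metis finite sum.insert)
qed

lemma edge_subset_V: "e \<in> Lsing V \<union> E \<Longrightarrow> e \<subseteq> V"
  using hyp_ok unfolding Lsing_def hyp_ok_def by auto

lemma edge_nonempty: "e \<in> Lsing V \<union> E \<Longrightarrow> e \<noteq> {}"
  using hyp_ok unfolding Lsing_def hyp_ok_def by fastforce

lemma edges_downward_closed:
  assumes "downward_closed E" and e: "e \<in> Lsing V \<union> E" and "e' \<subseteq> e" "e' \<noteq> {}"
  shows "e' \<in> Lsing V \<union> E"
proof (cases "card e' = 1")
  case True
  then obtain I where "e' = {I}"
    by (rule card_1_singletonE)
  then show ?thesis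
    using \<open>e' \<subseteq> e\<close> edge_subset_V[OF e] unfolding Lsing_def by blast
next
  case False
  with \<open>e' \<noteq> {}\<close> have "1 < card e'"
    by (simp add: card_gt_0_iff Suc_lessI)
  moreover from this have "e \<notin> Lsing V"
    using \<open>e' \<subseteq> e\<close> card_mono[of e e'] unfolding Lsing_def by auto
  ultimately show ?thesis
    using assms(1,3) e unfolding downward_closed_def by blast
qed

lemma Jfam_block_inter:
  assumes J: "J \<in> Jfam e" and "e \<subseteq> V" "I \<in> V" "d \<in> J" "d \<in> I"
  shows "I \<in> e" "J \<inter> I = {d}"
proof -
  obtain I' where "I' \<in> e" "d \<in> I'"
    using J \<open>d \<in> J\<close> unfolding Jfam_def by blast
  then show "I \<in> e"
    using block_unique assms by blast
  then have "card (J \<inter> I) = 1"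
    using J unfolding Jfam_def by blast
  then show "J \<inter> I = {d}"
    using assms(4,5) by (metis IntI card_1_singletonE singletonD)
qed

lemma Jfam_insert_block:
  assumes J: "J \<in> Jfam e" and "e \<subseteq> V" "I \<in> e" "i \<in> I"
  shows "insert i (J - I) \<in> Jfam e"
  unfolding Jfam_def
proof (intro CollectI conjI ballI)
  show "insert i (J - I) \<subseteq> \<Union>e"
    using J assms(3,4) unfolding Jfam_def by auto
next
  fix I' assume "I' \<in> e"
  show "card (insert i (J - I) \<inter> I') = 1"
  proof (cases "I' = I")
    case True
    then have "insert i (J - I) \<inter> I' = {i}"
      using \<open>i \<in> I\<close> by blast
    then show ?thesis
      by simp
  next
    case False
    then have "insert i (J - I) \<inter> I' = J \<inter> I'"
      using block_unique assms(2-4) \<open>I' \<in> e\<close> by blast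
    then show ?thesis
      using J \<open>I' \<in> e\<close> unfolding Jfam_def by simp
  qed
qed

lemma Jfam_diff_block:
  assumes J: "J \<in> Jfam e" and "e \<subseteq> V" "I \<in> V"
  shows "J - I \<in> Jfam (e - {I})"
  unfolding Jfam_def
proof (intro CollectI conjI ballI)
  show "J - I \<subseteq> \<Union>(e - {I})"
    using J unfolding Jfam_def by blast
next
  fix I' assume "I' \<in> e - {I}"
  then have "(J - I) \<inter> I' = J \<inter> I'"
    using block_unique assms(2,3) by blast
  then show "card ((J - I) \<inter> I') = 1"
    using J \<open>I' \<in> e - {I}\<close> unfolding Jfam_def by simp
qed

lemma singleton_in_JH: "{i} \<in> JH V E"
proof -
  obtain I where "I \<in> V" "i \<in> I"
    using block_exists by blast
  then have "{I} \<in> Lsing V" "{i} \<in> Jfam {I}"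
    unfolding Lsing_def Jfam_def by auto
  then show ?thesis
    unfolding JH_def by blast
qed

lemma singleton_in_JHle: "i \<notin> D \<Longrightarrow> {i} \<in> JHle V E D"
  using singleton_in_JH unfolding JHle_def by auto

lemma JH_nonempty:
  assumes "J \<in> JH V E"
  shows "J \<noteq> {}"
proof -
  obtain e where e: "e \<in> Lsing V \<union> E" "J \<in> Jfam e"
    using assms unfolding JH_def by blast
  then obtain I where "I \<in> e"
    using edge_nonempty by blast
  then have "card (J \<inter> I) = 1"
    using e(2) unfolding Jfam_def by blast
  then show ?thesis
    by auto
qed

lemma JH_block_inter: "\<lbrakk>J \<in> JH V E; I \<in> V; d \<in> J; d \<in> I\<rbrakk> \<Longrightarrow> J \<inter> I = {d}"
  unfolding JH_def using Jfam_block_inter(2) edge_subset_V by blast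

lemma JH_insert_block:
  assumes "J \<in> JH V E" "I \<in> V" "d \<in> J" "d \<in> I" "i \<in> I"
  shows "insert i (J - I) \<in> JH V E"
proof -
  obtain e where e: "e \<in> Lsing V \<union> E" "J \<in> Jfam e"
    using assms(1) unfolding JH_def by blast
  then have "I \<in> e"
    using Jfam_block_inter(1) edge_subset_V assms(2-4) by blast
  then have "insert i (J - I) \<in> Jfam e"
    using Jfam_insert_block e edge_subset_V assms(5) by blast
  then show ?thesis
    using e(1) unfolding JH_def by blast
qed

lemma JH_diff_block:
  assumes "downward_closed E" "J \<in> JH V E" "I \<in> V" "J - I \<noteq> {}"
  shows "J - I \<in> JH V E"
proof -
  obtain e where e: "e \<in> Lsing V \<union> E" "J \<in> Jfam e"
    using assms(2) unfolding JH_def by blast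
  have J_I: "J - I \<in> Jfam (e - {I})"
    using Jfam_diff_block[OF e(2) edge_subset_V[OF e(1)] assms(3)] .
  then have "e - {I} \<noteq> {}"
    using assms(4) unfolding Jfam_def by auto
  then have "e - {I} \<in> Lsing V \<union> E"
    using edges_downward_closed[OF assms(1) e(1), of "e - {I}"] by blast
  then show ?thesis
    using J_I unfolding JH_def by blast
qed


lemma SH_eq_prod: "\<lbrakk>w \<in> SH V E; J \<in> JH V E\<rbrakk> \<Longrightarrow> w $ J = (\<Prod>i\<in>J. w $ {i})"
  using nth_eq_prod_singletons JH_nonempty unfolding SH_def by blast

lemma SH_ibar:
  assumes "w \<in> SH V E" "I \<in> V"
  shows "w $ {ibar I} = 1 - (\<Sum>i\<in>I - D. w $ {i})"
  using assms sum_block[OF assms(2), of "\<lambda>i. w $ {i}"] unfolding SH_def by simp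

lemma SH_eliminate_ibar:
  assumes "downward_closed E" and w: "w \<in> SH V E" and J: "J \<in> JH V E"
    and I: "I \<in> V" "ibar I \<in> J"
  shows "w $ J = (if J - I = {} then 1 else w $ (J - I)) - (\<Sum>i\<in>I - D. w $ insert i (J - I))"
proof -
  define Q where "Q = (\<Prod>j\<in>J - I. w $ {j})"
  have ibar_notin: "ibar I \<notin> J - I"
    using ibar_in_block[OF I(1)] by blast
  have Q_eq: "Q = (if J - I = {} then 1 else w $ (J - I))"
  proof (cases "J - I = {}")
    case False
    then show ?thesis
      using SH_eq_prod[OF w JH_diff_block[OF assms(1) J I(1) False]] by (simp add: Q_def)
  qed (simp only: Q_def prod.empty simp_thms if_True)
  have insert_eq: "w $ insert i (J - I) = w $ {i} * Q" if "i \<in> I" for i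
  proof -
    have "i \<notin> J - I"
      using that by blast
    then show ?thesis
      using SH_eq_prod[OF w JH_insert_block[OF J I(1) I(2) ibar_in_block[OF I(1)] that]]
      unfolding Q_def by simp
  qed
  have "J = insert (ibar I) (J - I)"
    using JH_block_inter[OF J I(1) I(2) ibar_in_block[OF I(1)]] by blast
  then have "w $ J = w $ {ibar I} * Q"
    using SH_eq_prod[OF w J] ibar_notin unfolding Q_def by (metis finite prod.insert)
  also have "\<dots> = Q - (\<Sum>i\<in>I - D. w $ {i} * Q)"
    using SH_ibar[OF w I(1)] by (simp add: left_diff_distrib sum_distrib_right)
  also have "\<dots> = (if J - I = {} then 1 else w $ (J - I)) - (\<Sum>i\<in>I - D. w $ insert i (J - I))"
    using Q_eq insert_eq by simp
  finally show ?thesis .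
qed

lemma SH_coordinate_affine_in_proj:
  assumes "downward_closed E"
  shows "affine_function_of (proj (JHle V E D)) (SH V E) (\<lambda>w. w $ J)"
proof (induction "card (J \<inter> D)" arbitrary: J rule: less_induct)
  case less
  show ?case
  proof (cases "J \<in> JH V E \<and> J \<inter> D \<noteq> {}")
    case False
    then have "w $ J = proj (JHle V E D) w $ J" if "w \<in> SH V E" for w
      using that unfolding SH_def JHle_def by (auto simp: proj_nth)
    then show ?thesis
      by (rule affine_function_of_cong[OF affine_function_of_nth])
  next
    case True
    then obtain I where I: "I \<in> V" "ibar I \<in> J"
      using D_eq by blast
    have "ibar I \<in> J \<inter> D"
      using I D_eq by blast
    then have smaller: "card (J' \<inter> D) < card (J \<inter> D)" if "J' \<inter> D = J \<inter> D - {ibar I}" for J'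
      unfolding that by (rule card_Diff1_less[OF finite])
    have "(J - I) \<inter> D = J \<inter> D - {ibar I}"
      using block_inter_D[OF I(1)] by blast
    then have IH_diff: "affine_function_of (proj (JHle V E D)) (SH V E)
        (\<lambda>w. if J - I = {} then 1 else w $ (J - I))"
      using less[OF smaller] affine_function_of_const by (cases "J - I = {}") simp_all
    have "insert i (J - I) \<inter> D = J \<inter> D - {ibar I}" if "i \<in> I - D" for i
      using that block_inter_D[OF I(1)] by blast
    then have IH_insert: "affine_function_of (proj (JHle V E D)) (SH V E) (\<lambda>w. w $ insert i (J - I))"
      if "i \<in> I - D" for i
      using less[OF smaller] that by blast
    have "affine_function_of (proj (JHle V E D)) (SH V E)
        (\<lambda>w. (if J - I = {} then 1 else w $ (J - I)) - (\<Sum>i\<in>I - D. w $ insert i (J - I)))"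
      using affine_function_of_diff[OF IH_diff affine_function_of_sum[OF IH_insert]] .
    then show ?thesis
      by (rule affine_function_of_cong) (use SH_eliminate_ibar[OF assms _ _ I] True in blast)
  qed
qed


lemma proj_SH:
  assumes w: "w \<in> SH V E"
  shows "proj (JHle V E D) w \<in> SHle V E D"
  unfolding SHle_def
proof (intro CollectI conjI ballI allI impI)
  fix J assume J: "J \<in> JHle V E D"
  then have "J \<in> JH V E" "J \<subseteq> - D"
    unfolding JHle_def by auto
  then show "proj (JHle V E D) w $ J \<in> {0, 1}"
    using w J unfolding SH_def by (simp add: proj_nth)
  have "proj (JHle V E D) w $ J = (\<Prod>i\<in>J. w $ {i})"
    using J SH_eq_prod[OF w \<open>J \<in> JH V E\<close>] by (simp add: proj_nth)
  also have "\<dots> = (\<Prod>i\<in>J. proj (JHle V E D) w $ {i})"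
    by (rule prod.cong) (use \<open>J \<subseteq> - D\<close> singleton_in_JHle in \<open>auto simp: proj_nth\<close>)
  finally show "proj (JHle V E D) w $ J = (\<Prod>i\<in>J. proj (JHle V E D) w $ {i})" .
next
  fix J assume "J \<notin> JHle V E D"
  then show "proj (JHle V E D) w $ J = 0"
    by (simp add: proj_nth)
next
  fix I assume I: "I \<in> V"
  have "(\<Sum>i\<in>I - D. proj (JHle V E D) w $ {i}) = 1 - w $ {ibar I}"
    using SH_ibar[OF w I] singleton_in_JHle by (simp add: proj_nth)
  also have "\<dots> \<le> 1"
  proof -
    have "w $ {ibar I} \<in> {0, 1}"
      using w singleton_in_JH unfolding SH_def by blast
    then show ?thesis
      by auto
  qed
  finally show "(\<Sum>i\<in>I - D. proj (JHle V E D) w $ {i}) \<le> 1" .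
qed

definition lift_singleton :: "real ^ 'a set \<Rightarrow> 'a \<Rightarrow> real" where
  "lift_singleton v i = (if i \<in> D then 1 - (\<Sum>j\<in>block i - D. v $ {j}) else v $ {i})"

definition lift :: "real ^ 'a set \<Rightarrow> real ^ 'a set" where
  "lift v = (\<chi> J. if J \<in> JH V E then \<Prod>i\<in>J. lift_singleton v i else 0)"

lemma lift_nth_singleton: "lift v $ {i} = lift_singleton v i"
  by (simp add: lift_def singleton_in_JH)

lemma lift_singleton_01:
  assumes v: "v \<in> SHle V E D"
  shows "lift_singleton v i \<in> {0, 1}"
proof -
  have v01: "v $ {j} \<in> {0, 1}" if "j \<notin> D" for j
    using v singleton_in_JHle[OF that] unfolding SHle_def by blast
  have "(\<Sum>j\<in>block i - D. v $ {j}) \<in> {0, 1}"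
    using v block_in_V v01 unfolding SHle_def by (intro sum_in_01) auto
  then show ?thesis
    using v01 unfolding lift_singleton_def by auto
qed

lemma lift_in_SH:
  assumes v: "v \<in> SHle V E D"
  shows "lift v \<in> SH V E"
  unfolding SH_def
proof (intro CollectI conjI ballI allI impI)
  fix J assume "J \<in> JH V E"
  have "(\<Prod>i\<in>J. lift_singleton v i) \<in> {0, 1}"
    by (rule prod_in_01) (rule lift_singleton_01[OF v])
  then show "lift v $ J \<in> {0, 1}"
    using \<open>J \<in> JH V E\<close> by (simp only: lift_def vec_lambda_beta if_True)
  show "lift v $ J = (\<Prod>i\<in>J. lift v $ {i})"
    unfolding lift_nth_singleton using \<open>J \<in> JH V E\<close> by (simp add: lift_def)
next
  fix J assume "J \<notin> JH V E"
  then show "lift v $ J = 0"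
    by (simp add: lift_def)
next
  fix I assume I: "I \<in> V"
  have "ibar I \<in> D" "block (ibar I) = I"
    using D_eq I block_eq ibar_in_block by auto
  then have "lift_singleton v (ibar I) = 1 - (\<Sum>i\<in>I - D. lift_singleton v i)"
    by (simp add: lift_singleton_def)
  then show "(\<Sum>i\<in>I. lift v $ {i}) = 1"
    using sum_block[OF I, of "lift_singleton v"] by (simp add: lift_nth_singleton)
qed

lemma proj_lift:
  assumes v: "v \<in> SHle V E D"
  shows "proj (JHle V E D) (lift v) = v"
  unfolding vec_eq_iff
proof
  fix J
  show "proj (JHle V E D) (lift v) $ J = v $ J"
  proof (cases "J \<in> JHle V E D")
    case True
    then have "J \<in> JH V E" "J \<subseteq> - D"
      unfolding JHle_def by auto
    then have "proj (JHle V E D) (lift v) $ J = (\<Prod>i\<in>J. lift_singleton v i)"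
      using True by (simp add: proj_nth lift_def)
    also have "\<dots> = (\<Prod>i\<in>J. v $ {i})"
      by (rule prod.cong) (use \<open>J \<subseteq> - D\<close> in \<open>auto simp: lift_singleton_def\<close>)
    also have "\<dots> = v $ J"
      using v True JH_nonempty[OF \<open>J \<in> JH V E\<close>] unfolding SHle_def
      by (intro nth_eq_prod_singletons[symmetric]) auto
    finally show ?thesis .
  next
    case False
    then show ?thesis
      using v unfolding SHle_def by (simp add: proj_nth)
  qed
qed

lemma proj_MCH: "proj (JHle V E D) ` MCH V E = MCHle V E D"
proof -
  have "proj (JHle V E D) ` SH V E \<subseteq> SHle V E D"
    using proj_SH by blast
  moreover have "SHle V E D \<subseteq> proj (JHle V E D) ` SH V E"
  proof
    fix v assume "v \<in> SHle V E D"
    then show "v \<in> proj (JHle V E D) ` SH V E"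
      using proj_lift lift_in_SH by (metis image_eqI)
  qed
  ultimately have "proj (JHle V E D) ` SH V E = SHle V E D"
    by (rule subset_antisym)
  then show ?thesis
    unfolding MCH_def MCHle_def by (simp add: convex_hull_linear_image[OF linear_proj])
qed

end

theorem corollary3p5:
  fixes V :: "'a::finite set set" and E :: "'a set set set"
    and ibar :: "'a set \<Rightarrow> 'a" and D :: "'a set"
    and a :: "real ^ ('a set)" and \<delta> :: real
  assumes "hyp_ok V E" and "partition_of_UNIV V" and "downward_closed E"
    and "\<forall>I\<in>V. ibar I \<in> I" and "D = ibar ` V"
    and "\<forall>J. J \<notin> JH V E \<longrightarrow> a $ J = 0"
    and "valid_ineq (MCH V E) a \<delta>"
    and "{J \<in> JH V E. a $ J \<noteq> 0} \<subseteq> JHle V E D"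
  shows "facet_inducing (MCH V E) a \<delta> \<longleftrightarrow>
         facet_inducing (MCHle V E D) (proj (JHle V E D) a) \<delta>"
proof -
  interpret hypergraph_with_representatives V E ibar D
    using assms(1-5) by unfold_locales auto
  let ?P = "proj (JHle V E D)"
  obtain g k where "linear g" and "\<And>w. w \<in> SH V E \<Longrightarrow> g (?P w) + k = w"
    using affine_left_inverse_of_coordinates SH_coordinate_affine_in_proj[OF assms(3)] by blast
  then have inv: "\<And>x. x \<in> MCH V E \<Longrightarrow> g (?P x) + k = x"
    unfolding MCH_def using affine_left_inverse_convex_hull[OF linear_proj] by blast
  have "\<And>J. J \<notin> JHle V E D \<Longrightarrow> a $ J = 0"
    using assms(6,8) by blast
  then have inner: "\<And>x. ?P a \<bullet> ?P x = a \<bullet> x"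
    by (rule inner_proj)
  have "facet_inducing (?P ` MCH V E) (?P a) \<delta> \<longleftrightarrow> facet_inducing (MCH V E) a \<delta>"
    using facet_inducing_linear_image_left_inverse[OF linear_proj \<open>linear g\<close> inv inner] .
  then show ?thesis
    unfolding proj_MCH by simp
qed

end
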